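(* The DRIMA factorization does not guarantee the RIGM principle for the CVaR metric. Precisely: there exist a number of agents $N$, finite action sets, a function $Q_{mix}:\mathbb{R}^N\to\mathbb{R}$ nondecreasing in each argument, per-agent return distributions $[Z_i(\tau_i,u_i)]_{i=1}^N$ with quantile functions $\theta_i(\tau_i,u_i,\omega)$, and a risk level $\alpha\in(0,1]$ such that, letting $Z_{tran}(\boldsymbol\tau,\boldsymbol u)$ be the return distribution with quantile function $\theta_{tran}(\boldsymbol\tau,\boldsymbol u,\omega)=Q_{mix}(\theta_1(\tau_1,u_1,\omega),\dots,\theta_N(\tau_N,u_N,\omega))$, $\omega\in(0,1]$, the utilities $[Z_i]_{i=1}^N$ do not satisfy RIGM for $Z_{tran}$ with risk metric $\mathrm{CVaR}_\alpha$.
   Context: There are $N$ agents; agent $i$ has observation history $\tau_i$ and finite action set $U_i$; $\boldsymbol\tau=(\tau_1,\dots,\tau_N)$, $\boldsymbol u=(u_1,\dots,u_N)$. For a real random variable $Z$ with CDF $F_Z$, its quantile function is $\theta_Z(\omega)=\inf\{z\in\mathbb{R}:\omega\le F_Z(z)\}$, $\omega\in(0,1]$. $\mathrm{CVaR}_\alpha(Z)=\frac1\alpha\int_0^\alpha\theta_Z(\omega)\,d\omega$ (the distortion risk measure with distortion $g(\omega)=\min(\omega/\alpha,1)$; $\mathrm{CVaR}_1=\mathbb{E}$). RIGM: given a risk metric $\psi$, per-agent return distributions $[Z_i(\tau_i,u_i)]$ satisfy RIGM for a joint return distribution $Z(\boldsymbol\tau,\boldsymbol u)$ with $\psi$ under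 $\boldsymbol\tau$ if $\arg\max_{\boldsymbol u}\psi[Z(\boldsymbol\tau,\boldsymbol u)]=(\arg\max_{u_1}\psi[Z_1(\tau_1,u_1)],\dots,\arg\max_{u_N}\psi[Z_N(\tau_N,u_N)])$. Argmax sets are assumed to be singletons (ties broken by smallest index). *)

theory Defs
  imports "HOL-Probability.Probability"
begin

definition cdf_of :: "real measure \<Rightarrow> real \<Rightarrow> real" where
  "cdf_of M z = measure M {..z}"

definition quantile :: "real measure \<Rightarrow> real \<Rightarrow> real" where
  "quantile M \<omega> = Inf {z. \<omega> \<le> cdf_of M z}"

definition CVaR :: "real \<Rightarrow> real measure \<Rightarrow> real" where
  "CVaR \<alpha> M = (1 / \<alpha>) * interval_lebesgue_integral lborel (ereal 0) (ereal \<alpha>) (quantile M)"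

definition real_distribution :: "real measure \<Rightarrow> bool" where
  "real_distribution M \<longleftrightarrow> prob_space M \<and> sets M = sets borel"

(* agents 0..<N, agent i has action set {..<n i}; joint actions are
   functions u with u i < n i for i < N (extensionally 0 beyond N) *)
definition joint_actions :: "nat \<Rightarrow> (nat \<Rightarrow> nat) \<Rightarrow> (nat \<Rightarrow> nat) set" where
  "joint_actions N n = {u. (\<forall>i<N. u i < n i) \<and> (\<forall>i\<ge>N. u i = 0)}"

definition argmax_set :: "('a \<Rightarrow> real) \<Rightarrow> 'a set \<Rightarrow> 'a set" where
  "argmax_set f A = {x \<in> A. \<forall>y\<in>A. f y \<le> f x}"

(* RIGM for risk metric psi (at the fixed joint observation history) *)
definition RIGM :: "(real measure \<Rightarrow> real) \<Rightarrow> nat \<Rightarrow> (nat \<Rightarrow> nat)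
    \<Rightarrow> (nat \<Rightarrow> nat \<Rightarrow> real measure) \<Rightarrow> ((nat \<Rightarrow> nat) \<Rightarrow> real measure) \<Rightarrow> bool" where
  "RIGM \<psi> N n Z Zj \<longleftrightarrow>
     argmax_set (\<lambda>u. \<psi> (Zj u)) (joint_actions N n) =
     {u \<in> joint_actions N n. \<forall>i<N. u i \<in> argmax_set (\<lambda>a. \<psi> (Z i a)) {..<n i}}"

definition mono_each_arg :: "nat \<Rightarrow> (real list \<Rightarrow> real) \<Rightarrow> bool" where
  "mono_each_arg N Q \<longleftrightarrow>
     (\<forall>xs i t. length xs = N \<and> i < N \<and> xs ! i \<le> t \<longrightarrow> Q xs \<le> Q (xs[i := t]))"

end

theory Submission
  imports Defs
begin

text \<open>A single agent chooses between the sure return 0 and a fair coin paying -1 or 3.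
  With \<open>\<alpha> = 1\<close> the CVaR is the mean, so the agent prefers the coin (mean 1). The mixer
  \<open>x \<mapsto> min x 0\<close> is nondecreasing but clips the coin's upside, turning it into a coin
  paying -1 or 0 (mean -1/2), so the transformed joint return prefers the sure 0.\<close>

definition two_point :: "real \<Rightarrow> real \<Rightarrow> real measure" where
  "two_point a b = distr (measure_pmf (pmf_of_set {a, b})) borel id"

lemma real_distribution_two_point: "real_distribution (two_point a b)"
  unfolding real_distribution_def two_point_def
  by (auto intro!: prob_space.prob_space_distr prob_space_measure_pmf)

lemma real_distribution_return: "real_distribution (return borel c)"
  unfolding real_distribution_def by (auto intro!: prob_space_return)

lemma cdf_of_two_point:
  assumes "a < b"
  shows "cdf_of (two_point a b) z = (if z < a then 0 else if z < b then 1/2 else 1)"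
proof -
  have "cdf_of (two_point a b) z = measure (measure_pmf (pmf_of_set {a, b})) {..z}"
    unfolding cdf_of_def two_point_def by (subst measure_distr) auto
  also have "\<dots> = card ({a, b} \<inter> {..z}) / card {a, b}"
    by (rule measure_pmf_of_set) auto
  also have "{a, b} \<inter> {..z} = (if z < a then {} else if z < b then {a} else {a, b})"
    using assms by auto
  finally show ?thesis
    using assms by auto
qed

lemma quantile_two_point:
  assumes "a < b" "0 < \<omega>" "\<omega> \<le> 1"
  shows "quantile (two_point a b) \<omega> = (if \<omega> \<le> 1/2 then a else b)"
proof -
  have "{z. \<omega> \<le> cdf_of (two_point a b) z} = (if \<omega> \<le> 1/2 then {a..} else {b..})"
    using assms by (auto simp: cdf_of_two_point)
  then show ?thesis
    unfolding quantile_def by simp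
qed

lemma quantile_return:
  assumes "0 < \<omega>" "\<omega> \<le> 1"
  shows "quantile (return borel c) \<omega> = c"
proof -
  have "cdf_of (return borel c) z = (if c \<le> z then 1 else 0)" for z
    unfolding cdf_of_def by (simp add: measure_return indicator_def)
  then have "{z. \<omega> \<le> cdf_of (return borel c) z} = {c..}"
    using assms by auto
  then show ?thesis
    unfolding quantile_def by simp
qed

lemma CVaR_return:
  assumes "0 < \<alpha>" "\<alpha> \<le> 1"
  shows "CVaR \<alpha> (return borel c) = c"
proof -
  have "(LBINT \<omega>=ereal 0..ereal \<alpha>. quantile (return borel c) \<omega>) = (LBINT \<omega>=ereal 0..ereal \<alpha>. c)"
    using assms by (intro interval_integral_cong) (auto simp: einterval_def quantile_return)
  then show ?thesis
    using assms unfolding CVaR_def by simp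
qed

lemma CVaR_one_two_point:
  assumes "a < b"
  shows "CVaR 1 (two_point a b) = (a + b) / 2"
proof -
  define g where "g = (\<lambda>\<omega>::real. if \<omega> \<le> 1/2 then a else b)"
  have integrable: "interval_lebesgue_integrable lborel (ereal 0) (ereal 1) g"
    unfolding interval_lebesgue_integrable_def
  proof (simp, rule set_integrable_bound[where f = "\<lambda>_. max \<bar>a\<bar> \<bar>b\<bar>"])
    show "set_integrable lborel {0<..<1::real} (\<lambda>_. max \<bar>a\<bar> \<bar>b\<bar>)"
      using interval_integral_const(1)[of 0 1 "max \<bar>a\<bar> \<bar>b\<bar>"]
      unfolding interval_lebesgue_integrable_def by simp
    show "set_borel_measurable lborel {0<..<1} g"
      unfolding set_borel_measurable_def g_def by measurable
  qed (simp add: g_def)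
  have "(LBINT \<omega>=ereal 0..ereal 1. quantile (two_point a b) \<omega>) = (LBINT \<omega>=ereal 0..ereal 1. g \<omega>)"
    by (intro interval_integral_cong) (auto simp: einterval_def quantile_two_point[OF assms] g_def)
  also have "\<dots> = (LBINT \<omega>=ereal 0..ereal (1/2). g \<omega>) + (LBINT \<omega>=ereal (1/2)..ereal 1. g \<omega>)"
    using integrable by (intro interval_integral_sum[symmetric]) (simp add: min_def max_def)
  also have "(LBINT \<omega>=ereal 0..ereal (1/2). g \<omega>) = (LBINT \<omega>=ereal 0..ereal (1/2). a)"
    by (intro interval_integral_cong) (auto simp: einterval_def g_def)
  also have "(LBINT \<omega>=ereal (1/2)..ereal 1. g \<omega>) = (LBINT \<omega>=ereal (1/2)..ereal 1. b)"
    by (intro interval_integral_cong) (auto simp: einterval_def g_def)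
  finally show ?thesis
    unfolding CVaR_def by simp
qed

lemma mono_each_arg_one: "mono f \<Longrightarrow> mono_each_arg 1 (\<lambda>xs. f (hd xs))"
  unfolding mono_each_arg_def by (auto simp: length_Suc_conv mono_def)

lemma joint_actions_one: "joint_actions 1 n = (\<lambda>a. (\<lambda>_. 0)(0 := a)) ` {..<n 0}"
proof (intro set_eqI iffI)
  fix u
  assume "u \<in> joint_actions 1 n"
  then have "u = (\<lambda>_. 0)(0 := u 0)" "u 0 < n 0"
    unfolding joint_actions_def by (auto simp: fun_eq_iff)
  then show "u \<in> (\<lambda>a. (\<lambda>_. 0)(0 := a)) ` {..<n 0}"
    by blast
qed (auto simp: joint_actions_def)

theorem theorem3:
  shows "\<exists>(N::nat) (n::nat \<Rightarrow> nat) (Qmix::real list \<Rightarrow> real)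
            (Z::nat \<Rightarrow> nat \<Rightarrow> real measure) (Ztran::(nat \<Rightarrow> nat) \<Rightarrow> real measure) (\<alpha>::real).
     N \<ge> 1 \<and> (\<forall>i<N. n i \<ge> 1) \<and>
     mono_each_arg N Qmix \<and>
     (\<forall>i<N. \<forall>a<n i. real_distribution (Z i a)) \<and>
     0 < \<alpha> \<and> \<alpha> \<le> 1 \<and>
     (\<forall>u \<in> joint_actions N n. real_distribution (Ztran u) \<and>
        (\<forall>\<omega>\<in>{0<..1}. quantile (Ztran u) \<omega> =
            Qmix (map (\<lambda>i. quantile (Z i (u i)) \<omega>) [0..<N]))) \<and>
     (\<forall>i<N. card (argmax_set (\<lambda>a. CVaR \<alpha> (Z i a)) {..<n i}) = 1) \<and>
     card (argmax_set (\<lambda>u. CVaR \<alpha> (Ztran u)) (joint_actions N n)) = 1 \<and>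
     \<not> RIGM (CVaR \<alpha>) N n Z Ztran"
proof -
  define Z :: "nat \<Rightarrow> nat \<Rightarrow> real measure" where
    "Z = (\<lambda>i a. if a = 0 then return borel 0 else two_point (-1) 3)"
  define Ztran :: "(nat \<Rightarrow> nat) \<Rightarrow> real measure" where
    "Ztran = (\<lambda>u. if u 0 = 0 then return borel 0 else two_point (-1) 0)"
  define u1 :: "nat \<Rightarrow> nat" where "u1 = (\<lambda>_. 0)(0 := 1)"
  have actions: "joint_actions 1 (\<lambda>_. 2) = {\<lambda>_. 0, u1}"
    unfolding joint_actions_one u1_def by (auto simp: numeral_2_eq_2 lessThan_Suc fun_upd_idem)
  have agent_distributions: "\<forall>i<1. \<forall>a<2. real_distribution (Z i a)"
    unfolding Z_def by (simp add: real_distribution_return real_distribution_two_point)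
  have agent_argmax: "argmax_set (\<lambda>a. CVaR 1 (Z i a)) {..<2} = {1}" for i
    unfolding argmax_set_def Z_def by (auto simp: CVaR_return CVaR_one_two_point)
  have joint_argmax: "argmax_set (\<lambda>u. CVaR 1 (Ztran u)) (joint_actions 1 (\<lambda>_. 2)) = {\<lambda>_. 0}"
    unfolding argmax_set_def actions Ztran_def u1_def by (auto simp: CVaR_return CVaR_one_two_point)
  have not_RIGM: "\<not> RIGM (CVaR 1) 1 (\<lambda>_. 2) Z Ztran"
    unfolding RIGM_def agent_argmax joint_argmax unfolding actions by (auto simp: fun_eq_iff)
  have mono: "mono_each_arg 1 (\<lambda>xs. min (hd xs) 0)"
    by (rule mono_each_arg_one) (auto simp: mono_def)
  have quantile_transformed: "\<forall>u \<in> joint_actions 1 (\<lambda>_. 2). real_distribution (Ztran u) \<and>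
      (\<forall>\<omega>\<in>{0<..1}. quantile (Ztran u) \<omega> = min (quantile (Z 0 (u 0)) \<omega>) 0)"
    unfolding actions Ztran_def Z_def u1_def
    by (auto simp: real_distribution_return real_distribution_two_point quantile_return quantile_two_point)
  show ?thesis
    by (rule exI[of _ 1], rule exI[of _ "\<lambda>_. 2"], rule exI[of _ "\<lambda>xs. min (hd xs) 0"],
        rule exI[of _ Z], rule exI[of _ Ztran], rule exI[of _ 1])
      (use agent_distributions quantile_transformed agent_argmax joint_argmax mono not_RIGM
        in simp)
qed

end
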